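(* For all $\nu\in\mathbb C$ and $x\in\mathbb C\setminus\{0\}$, the following identity holds as formal power series in $t$: $$\sum_{m=0}^\infty (xt)^m R_{m,\nu}(x;q)=\sum_{j=0}^\infty\frac{q^{j\nu}q^{j(j-1)/2}(-t)^j}{(t;q)_{j+1}\,(tx^2;q)_{j+1}}.$$
   Context: Fix $0<q<1$; $(a;q)_0=1$, $(a;q)_k=\prod_{i=0}^{k-1}(1-aq^i)$. The $q$-Lommel functions $R_{m,\nu}(x;q)$ are defined by $R_{-1,\nu}=0$, $R_{0,\nu}=1$ and $R_{m+1,\nu}(x;q)=\big(x+\frac{1-q^\nu}{x}\big)R_{m,\nu+1}(x;q)-R_{m-1,\nu+2}(x;q)$ for $m\ge0$. On the right-hand side each factor $1/(t;q)_{j+1}$, $1/(tx^2;q)_{j+1}$ is expanded as a power series in $t$. *)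

theory Defs
  imports "HOL-Analysis.Analysis" "HOL-Computational_Algebra.Formal_Power_Series"
begin

definition qpoch :: "'a::comm_ring_1 \<Rightarrow> 'a \<Rightarrow> nat \<Rightarrow> 'a" where
  "qpoch a q k = (\<Prod>i<k. 1 - a * q ^ i)"

text \<open>q-Lommel functions R_{m,nu}(x;q), with q^nu = exp(nu ln q) (q > 0 real).
  Recursion R_{-1}=0, R_0=1, R_{m+1,nu} = (x + (1-q^nu)/x) R_{m,nu+1} - R_{m-1,nu+2}.\<close>
fun qLommelR :: "real \<Rightarrow> nat \<Rightarrow> complex \<Rightarrow> complex \<Rightarrow> complex" where
  "qLommelR q 0 \<nu> x = 1"
| "qLommelR q (Suc 0) \<nu> x = x + (1 - complex_of_real q powr \<nu>) / x"
| "qLommelR q (Suc (Suc m)) \<nu> x =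
     (x + (1 - complex_of_real q powr \<nu>) / x) * qLommelR q (Suc m) (\<nu> + 1) x
     - qLommelR q m (\<nu> + 2) x"

end

theory Submission
  imports Defs
begin

text \<open>
  Write a = q^\<nu>, let T_a(j) be the j-th summand of the right-hand side and U_a(j) the same
  expression with (t;q)_j (tx^2;q)_j as denominator. A direct computation gives the telescoping
  identity
    T_a(j) - (1 + x^2 - a) t T_{aq}(j) + x^2 t^2 T_{aq^2}(j) = U_a(j) - U_a(j+1),
  where U_a(0) = 1 and U_a(N) = O(t^N). Hence the coefficients g_a(n) of the right-hand side
  satisfy g_a(0) = 1 and g_a(n) = (1 + x^2 - a) g_{aq}(n-1) - x^2 g_{aq^2}(n-2), which, as
  aq = q^(\<nu>+1), is the recursion of x^n R_{n,\<nu>}(x;q). The identity is purely formal.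
\<close>

lemma qpoch_Suc: "qpoch a q (Suc k) = qpoch a q k * (1 - a * q ^ k)"
  by (simp add: qpoch_def)

lemma fps_divide_nth_below:
  fixes f g :: "'a::field fps"
  assumes "fps_nth g 0 \<noteq> 0" and "\<And>m. m < j \<Longrightarrow> fps_nth f m = 0" and "n < j"
  shows "fps_nth (f / g) n = 0"
  unfolding fps_divide_unit[OF assms(1)] fps_mult_nth
  using assms(2,3) by (intro sum.neutral) auto

text \<open>With c = q, \<open>qlommel_term x c a\<close> is T_a and \<open>qlommel_remainder x c a\<close> is U_a.\<close>

definition qlommel_denom :: "'a::field \<Rightarrow> 'a \<Rightarrow> nat \<Rightarrow> 'a fps" where
  "qlommel_denom x c j =
     qpoch fps_X (fps_const c) j * qpoch (fps_const (x ^ 2) * fps_X) (fps_const c) j"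

definition qlommel_numer :: "'a::field \<Rightarrow> 'a \<Rightarrow> nat \<Rightarrow> 'a fps" where
  "qlommel_numer c a j = fps_const (a ^ j * c ^ (j * (j - 1) div 2)) * (- fps_X) ^ j"

definition qlommel_term :: "'a::field \<Rightarrow> 'a \<Rightarrow> 'a \<Rightarrow> nat \<Rightarrow> 'a fps" where
  "qlommel_term x c a j = qlommel_numer c a j / qlommel_denom x c (Suc j)"

definition qlommel_remainder :: "'a::field \<Rightarrow> 'a \<Rightarrow> 'a \<Rightarrow> nat \<Rightarrow> 'a fps" where
  "qlommel_remainder x c a j = qlommel_numer c a j / qlommel_denom x c j"

lemma qlommel_denom_Suc:
  "qlommel_denom x c (Suc j) = qlommel_denom x c j *
     ((1 - fps_X * fps_const (c ^ j)) * (1 - fps_const (x ^ 2) * fps_X * fps_const (c ^ j)))"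
  by (simp add: qlommel_denom_def qpoch_Suc mult_ac)

lemma qlommel_denom_nth_0 [simp]: "fps_nth (qlommel_denom x c j) 0 = 1"
  by (induction j) (simp_all add: qlommel_denom_Suc, simp add: qlommel_denom_def qpoch_def)

lemma qlommel_numer_eq:
  "qlommel_numer c a j = fps_const ((- 1) ^ j * a ^ j * c ^ (j * (j - 1) div 2)) * fps_X ^ j"
proof -
  have "- fps_X = fps_const (- 1 :: 'a) * fps_X"
    by simp
  then have "(- fps_X) ^ j = fps_const ((- 1) ^ j) * (fps_X ^ j :: 'a fps)"
    by (simp only: power_mult_distrib fps_const_power)
  then show ?thesis
    by (simp only: qlommel_numer_def fps_const_mult[symmetric] mult_ac)
qed

lemma qlommel_numer_nth_below: "n < j \<Longrightarrow> fps_nth (qlommel_numer c a j) n = 0"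
  by (simp add: qlommel_numer_eq)

lemma qlommel_numer_scale:
  "qlommel_numer c (a * c ^ k) j = fps_const ((c ^ j) ^ k) * qlommel_numer c a j"
  by (simp add: qlommel_numer_def power_mult_distrib mult_ac flip: power_mult)

lemma qlommel_numer_Suc:
  "qlommel_numer c a (Suc j) = - (fps_const (a * c ^ j) * fps_X) * qlommel_numer c a j"
proof -
  have "Suc j * (Suc j - 1) div 2 = j * (j - 1) div 2 + j"
    by (cases j) simp_all
  then show ?thesis
    by (simp add: qlommel_numer_def power_add mult_ac)
qed

lemma qlommel_term_telescope:
  "qlommel_term x c a j - fps_const (1 + x ^ 2 - a) * fps_X * qlommel_term x c (a * c) j
     + fps_const (x ^ 2) * fps_X ^ 2 * qlommel_term x c (a * c ^ 2) j
   = qlommel_remainder x c a j - qlommel_remainder x c a (Suc j)"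
proof -
  define N where "N = qlommel_numer c a j"
  define D where "D = inverse (qlommel_denom x c (Suc j))"
  define W where "W = fps_const (c ^ j)"
  define P where "P = (1 - fps_X * W) * (1 - fps_const (x ^ 2) * fps_X * W)"
  have term_eq: "qlommel_term x c b j = qlommel_numer c b j * D" for b
    by (simp add: qlommel_term_def D_def fps_divide_unit)
  have "fps_nth P 0 = 1"
    by (simp add: P_def W_def)
  then have "inverse (qlommel_denom x c j) = inverse (qlommel_denom x c j) * (inverse P * P)"
    by (simp add: inverse_mult_eq_1)
  also have "\<dots> = P * D"
    by (simp add: D_def P_def W_def qlommel_denom_Suc fps_inverse_mult mult_ac)
  finally have R0: "qlommel_remainder x c a j = N * P * D"
    by (simp add: qlommel_remainder_def N_def fps_divide_unit mult_ac)
  have R1: "qlommel_remainder x c a (Suc j) = - (fps_const a * W * fps_X) * N * D"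
    by (simp add: qlommel_remainder_def N_def D_def W_def fps_divide_unit qlommel_numer_Suc mult_ac)
  have T0: "qlommel_term x c a j = N * D"
    by (simp add: term_eq N_def)
  have T1: "qlommel_term x c (a * c) j = W * N * D"
    using qlommel_numer_scale[of c a 1 j] by (simp add: term_eq N_def W_def)
  have T2: "qlommel_term x c (a * c ^ 2) j = W ^ 2 * N * D"
    using qlommel_numer_scale[of c a 2 j] by (simp add: term_eq N_def W_def)
  have C: "fps_const (1 + x ^ 2 - a) = 1 + fps_const (x ^ 2) - fps_const a"
    by simp
  show ?thesis
    unfolding T0 T1 T2 R0 R1 C P_def by algebra
qed

lemma qlommel_remainder_0: "qlommel_remainder x c a 0 = 1"
  by (simp add: qlommel_remainder_def qlommel_numer_def qlommel_denom_def qpoch_def)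

lemma qlommel_partial_sum_identity:
  "(\<Sum>j<N. qlommel_term x c a j)
     - fps_const (1 + x ^ 2 - a) * fps_X * (\<Sum>j<N. qlommel_term x c (a * c) j)
     + fps_const (x ^ 2) * fps_X ^ 2 * (\<Sum>j<N. qlommel_term x c (a * c ^ 2) j)
   = 1 - qlommel_remainder x c a N"
proof -
  have "1 - qlommel_remainder x c a N
        = (\<Sum>j<N. qlommel_remainder x c a j - qlommel_remainder x c a (Suc j))"
    by (simp add: sum_lessThan_telescope' qlommel_remainder_0)
  also have "\<dots> = (\<Sum>j<N. qlommel_term x c a j
                      - fps_const (1 + x ^ 2 - a) * fps_X * qlommel_term x c (a * c) j
                      + fps_const (x ^ 2) * fps_X ^ 2 * qlommel_term x c (a * c ^ 2) j)"
    by (simp only: qlommel_term_telescope)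
  finally show ?thesis
    by (simp add: sum.distrib sum_subtractf sum_distrib_left mult.assoc)
qed

lemma qlommel_partial_sum_nth_rec:
  assumes "n < N"
  shows "fps_nth (\<Sum>j<N. qlommel_term x c a j) n
      - (1 + x ^ 2 - a) * fps_nth (fps_X * (\<Sum>j<N. qlommel_term x c (a * c) j)) n
      + x ^ 2 * fps_nth (fps_X ^ 2 * (\<Sum>j<N. qlommel_term x c (a * c ^ 2) j)) n
    = (if n = 0 then 1 else 0)"
proof -
  have "fps_nth (qlommel_remainder x c a N) n = 0"
    unfolding qlommel_remainder_def
    using assms by (intro fps_divide_nth_below[of _ N]) (simp_all add: qlommel_numer_nth_below)
  then show ?thesis
    using arg_cong[OF qlommel_partial_sum_identity[of x c a N], of "\<lambda>f. fps_nth f n"]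
    by (simp add: mult.assoc)
qed

lemma qLommelR_1_scaled:
  "x \<noteq> 0 \<Longrightarrow> x * qLommelR q 1 \<nu> x = 1 + x ^ 2 - complex_of_real q powr \<nu>"
  by (simp add: field_simps power2_eq_square)

lemma qLommelR_Suc_Suc_scaled:
  assumes "x \<noteq> 0"
  shows "x ^ Suc (Suc m) * qLommelR q (Suc (Suc m)) \<nu> x
    = (1 + x ^ 2 - complex_of_real q powr \<nu>) * (x ^ Suc m * qLommelR q (Suc m) (\<nu> + 1) x)
      - x ^ 2 * (x ^ m * qLommelR q m (\<nu> + 2) x)"
proof -
  have "x ^ Suc (Suc m) * qLommelR q (Suc (Suc m)) \<nu> x
        = (x ^ Suc (Suc m) * (x + (1 - complex_of_real q powr \<nu>) / x))
            * qLommelR q (Suc m) (\<nu> + 1) x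
          - x ^ 2 * (x ^ m * qLommelR q m (\<nu> + 2) x)"
    by (simp add: right_diff_distrib power2_eq_square mult_ac)
  also have "x ^ Suc (Suc m) * (x + (1 - complex_of_real q powr \<nu>) / x)
        = (1 + x ^ 2 - complex_of_real q powr \<nu>) * x ^ Suc m"
    using assms by (simp add: field_simps power2_eq_square)
  finally show ?thesis
    by (simp only: mult.assoc)
qed

lemma qlommel_partial_sum_nth:
  fixes q :: real and \<nu> x :: complex
  assumes "q \<noteq> 0" and "x \<noteq> 0" and "n < N"
  shows "fps_nth (\<Sum>j<N. qlommel_term x (complex_of_real q) (complex_of_real q powr \<nu>) j) n
    = x ^ n * qLommelR q n \<nu> x"
  using assms
proof (induction q n \<nu> x rule: qLommelR.induct)
  case (1 q \<nu> x)
  then show ?case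
    using qlommel_partial_sum_nth_rec[of 0 N x "complex_of_real q" "complex_of_real q powr \<nu>"]
    by simp
next
  case (2 q \<nu> x)
  define c where "c = complex_of_real q"
  have "fps_nth (\<Sum>j<N. qlommel_term x c (c powr \<nu> * c) j) 0 = 1"
    using qlommel_partial_sum_nth_rec[of 0 N x c "c powr \<nu> * c"] 2 by simp
  then show ?case
    using qlommel_partial_sum_nth_rec[of 1 N x c "c powr \<nu>"] qLommelR_1_scaled[of x q \<nu>] 2
    by (simp add: c_def)
next
  case (3 q m \<nu> x)
  define c where "c = complex_of_real q"
  define S where "S b = (\<Sum>j<N. qlommel_term x c b j)" for b
  have "c \<noteq> 0"
    using 3 by (simp add: c_def)
  then have "c powr (\<nu> + 1) = c powr \<nu> * c" and "c powr (\<nu> + 2) = c powr \<nu> * c ^ 2"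
    using powr_nat'[of c 1] powr_nat'[of c 2] by (simp_all add: powr_add)
  then have IH1: "fps_nth (S (c powr \<nu> * c)) (Suc m) = x ^ Suc m * qLommelR q (Suc m) (\<nu> + 1) x"
    and IH2: "fps_nth (S (c powr \<nu> * c ^ 2)) m = x ^ m * qLommelR q m (\<nu> + 2) x"
    using 3 by (simp_all add: S_def c_def)
  have "fps_nth (S (c powr \<nu>)) (Suc (Suc m))
      - (1 + x ^ 2 - c powr \<nu>) * fps_nth (S (c powr \<nu> * c)) (Suc m)
      + x ^ 2 * fps_nth (S (c powr \<nu> * c ^ 2)) m = 0"
    using qlommel_partial_sum_nth_rec[of "Suc (Suc m)" N x c "c powr \<nu>"] 3
    by (simp add: S_def fps_X_power_mult_nth)
  then have "fps_nth (S (c powr \<nu>)) (Suc (Suc m))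
      = (1 + x ^ 2 - c powr \<nu>) * (x ^ Suc m * qLommelR q (Suc m) (\<nu> + 1) x)
        - x ^ 2 * (x ^ m * qLommelR q m (\<nu> + 2) x)"
    unfolding IH1 IH2 by (simp add: eq_diff_eq diff_add_eq diff_eq_eq)
  also have "\<dots> = x ^ Suc (Suc m) * qLommelR q (Suc (Suc m)) \<nu> x"
    unfolding c_def using qLommelR_Suc_Suc_scaled[OF \<open>x \<noteq> 0\<close>] by (rule sym)
  finally show ?case
    unfolding S_def c_def .
qed

lemma qlommel_term_sums:
  fixes q :: real and \<nu> x :: complex
  assumes "q \<noteq> 0" and "x \<noteq> 0"
  shows "qlommel_term x (complex_of_real q) (complex_of_real q powr \<nu>)
           sums Abs_fps (\<lambda>m. x ^ m * qLommelR q m \<nu> x)"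
  unfolding sums_def
proof (rule tendsto_fpsI)
  fix n
  show "\<forall>\<^sub>F N in sequentially.
          fps_nth (\<Sum>j<N. qlommel_term x (complex_of_real q) (complex_of_real q powr \<nu>) j) n
          = fps_nth (Abs_fps (\<lambda>m. x ^ m * qLommelR q m \<nu> x)) n"
    using eventually_gt_at_top[of n]
    by eventually_elim (simp add: assms qlommel_partial_sum_nth)
qed

theorem mainTheorem14:
  fixes q :: real and \<nu> x :: complex
  assumes "0 < q" and "q < 1" and "x \<noteq> 0"
  shows "(\<lambda>j. fps_const ((complex_of_real q powr \<nu>) ^ j * complex_of_real (q ^ (j * (j - 1) div 2)))
              * (- fps_X) ^ j
              / (qpoch fps_X (fps_const (complex_of_real q)) (Suc j)
                 * qpoch (fps_const (x ^ 2) * fps_X) (fps_const (complex_of_real q)) (Suc j)))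
         sums Abs_fps (\<lambda>m. x ^ m * qLommelR q m \<nu> x)"
  using qlommel_term_sums[of q x \<nu>] assms
  by (simp add: qlommel_term_def[abs_def] qlommel_numer_def qlommel_denom_def)

end
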